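(* Consider the TGSS iteration with data $y^\delta$, $\|y^\delta-y\|\le\delta$, $\delta\ge0$. Let $\tau>\frac{1+\eta}{1-\eta}$, $\mu>1$, $\Psi:=(1-\eta)-\tau^{-1}(1+\eta)$, and let $k_*=k_*(\delta,y^\delta):=\min\{k\in\mathbb N_0:\|r_k^\delta\|\le\tau\delta\}$ (with $k_*=\infty$ if no such $k$ exists). Assume the coupling condition $$\lambda_k^\delta(\lambda_k^\delta+1)\|x_k^\delta-x_{k-1}^\delta\|^2\le\frac{\Psi^2\|r_k^\delta\|^2}{\mu c_F^2}$$ holds for all $0\le k<k_*$. Then the iterates $x_k^\delta$ are well defined for all $k\le k_*$ (with all $z_k^\delta\in B_{4\rho}(x_0)$ for $k<k_*$), $$\|x_{k+1}^\delta-x_*\|\le\|x_k^\delta-x_*\|\quad\text{for all }-1\le k<k_*,$$ $x_k^\delta\in B_\rho(x_* )\subset B_{2\rho}(x_0)$ for all $-1\le k\le k_*$, and $$\sum_{k=0}^{k_*-1}\|F(z_k^\delta)-y^\delta\|^2\le\frac{c_F^2}{\bar\mu\Psi^2}\|x_0-x_*\|^2,\qquad \bar\mu:=\frac{\mu-1}{\mu}.$$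
   Context: Setting: $\mathcal X,\mathcal Y$ are real Hilbert spaces, $F:\mathcal D(F)\subset\mathcal X\to\mathcal Y$ is continuously Fréchet differentiable with derivative $F'(x)\in\mathcal L(\mathcal X,\mathcal Y)$ and Hilbert-space adjoint $F'(x)^*$; $x_0\in\mathcal X$ and $\rho>0$ satisfy $B_{4\rho}(x_0)\subset\mathcal D(F)$, where $B_r(x)$ is the closed ball of radius $r$ about $x$. Standing assumptions: (A1) $F(x)=y$ has a solution $x_*\in B_\rho(x_0)$; (A2) there is $\eta\in(0,1)$ with $\|F(x)-F(\tilde x)-F'(x)(x-\tilde x)\|\le\eta\|F(x)-F(\tilde x)\|$ for all $x,\tilde x\in B_{4\rho}(x_0)$; (A3) $0<\|F'(x)\|\le c_F$ for all $x\in B_{4\rho}(x_0)$. Data: $y^\delta\in\mathcal Y$ with $\|y^\delta-y\|\le\delta$, $\delta\ge0$ ($\delta=0$ means $y^\delta=y$). Notation: for $u\in\mathcal X$, $a\in\mathbb R$, $\xi\ge0$: $H(u,a)=\{x:\langle u,x\rangle=a\}$, $H_>(u,a)=\{x:\langle u,x\rangle>a\}$, $H(u,a,\xi)=\{x:|\langle u,x\rangle-a|\le\xi\}$. $P_C$ is the metric projection onto a nonempty closed convex set $C$. TGSS iteration (for data $y^\delta$, iterates carry superscript $\delta$): fix an integer $K\ge1$; set $x_{-1}^\delta=x_0^\delta=x_0$. For $k=0,1,2,\dots$: choose $\lambda_k^\delta\in[0,1]$ with $\lambda_0^\delta=0$, put $z_k^\delta=x_k^\delta+\lambda_k^\delta(x_k^\delta-x_{k-1}^\delta)$,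 $r_k^\delta=F(z_k^\delta)-y^\delta$, $u_k^\delta=F'(z_k^\delta)^*r_k^\delta$, $\alpha_k^\delta=\langle u_k^\delta,z_k^\delta\rangle-\|r_k^\delta\|^2$, $\xi_k^\delta=(\delta+\eta(\|r_k^\delta\|+\delta))\|r_k^\delta\|$, $H_k^\delta=H(u_k^\delta,\alpha_k^\delta,\xi_k^\delta)$. Choose a finite index set $I_k\subset\{k-K,\dots,k\}\cap\mathbb N_0$ with $k\in I_k$, written $I_k=\{k_1>\dots>k_s\}$, $k_1=k$; set $p_1=P_{H^\delta_{k_1}}(z_k^\delta)$, $p_j=P_{H^\delta_{k_1}\cap\dots\cap H^\delta_{k_j}}(p_{j-1})$ for $j=2,\dots,s$, and $x_{k+1}^\delta=p_s$. The iteration is run while $k<k_*$. For $\delta=0$ the superscript is dropped. *)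

theory Defs
  imports "HOL-Analysis.Analysis" "HOL-Library.Extended_Nat"
begin

definition strip :: "'a::real_inner \<Rightarrow> real \<Rightarrow> real \<Rightarrow> 'a set" where
  "strip u a \<xi> = {x. \<bar>inner u x - a\<bar> \<le> \<xi>}"

text \<open>Metric projection onto C (a nearest point; meaningful when it exists).\<close>
definition mproj :: "'a::real_normed_vector set \<Rightarrow> 'a \<Rightarrow> 'a" where
  "mproj C v = (SOME p. p \<in> C \<and> (\<forall>q\<in>C. norm (v - p) \<le> norm (v - q)))"

definition has_unique_proj :: "'a::real_normed_vector set \<Rightarrow> 'a \<Rightarrow> bool" where
  "has_unique_proj C v \<longleftrightarrow> (\<exists>!p. p \<in> C \<and> (\<forall>q\<in>C. norm (v - p) \<le> norm (v - q)))"

text \<open>Quantities of step k, computed from a sequence X of iterates (X k = x_k for k >= 0,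
  x_{-1} = x0).  Parameters: F, Fadj (Fadj z = F'(z)^*), y^delta, delta, eta, x0, lambda.\<close>

definition tg_prev :: "'a \<Rightarrow> (nat \<Rightarrow> 'a) \<Rightarrow> nat \<Rightarrow> 'a" where
  "tg_prev x0 X k = (if k = 0 then x0 else X (k - 1))"

definition tg_z :: "'a::real_vector \<Rightarrow> (nat \<Rightarrow> real) \<Rightarrow> (nat \<Rightarrow> 'a) \<Rightarrow> nat \<Rightarrow> 'a" where
  "tg_z x0 lam X k = X k + lam k *\<^sub>R (X k - tg_prev x0 X k)"

definition tg_r :: "('a::real_vector \<Rightarrow> 'b::real_vector) \<Rightarrow> 'b \<Rightarrow> 'a \<Rightarrow> (nat \<Rightarrow> real)
    \<Rightarrow> (nat \<Rightarrow> 'a) \<Rightarrow> nat \<Rightarrow> 'b" where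
  "tg_r F yd x0 lam X k = F (tg_z x0 lam X k) - yd"

definition tg_H :: "('a::real_inner \<Rightarrow> 'b::real_inner) \<Rightarrow> ('a \<Rightarrow> 'b \<Rightarrow> 'a) \<Rightarrow> 'b \<Rightarrow> real \<Rightarrow> real
    \<Rightarrow> 'a \<Rightarrow> (nat \<Rightarrow> real) \<Rightarrow> (nat \<Rightarrow> 'a) \<Rightarrow> nat \<Rightarrow> 'a set" where
  "tg_H F Fadj yd \<delta> \<eta> x0 lam X k =
     (let z = tg_z x0 lam X k; r = tg_r F yd x0 lam X k; u = Fadj z r;
          \<alpha> = inner u z - (norm r)\<^sup>2; \<xi> = (\<delta> + \<eta> * (norm r + \<delta>)) * norm r
      in strip u \<alpha> \<xi>)"

definition tg_ks :: "(nat \<Rightarrow> nat set) \<Rightarrow> nat \<Rightarrow> nat list" where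
  "tg_ks I k = rev (sorted_list_of_set (I k))"

text \<open>The set onto which p_{j} is projected to obtain p_{j+1} (0-based):
  H_{k_1} \<inter> ... \<inter> H_{k_{j+1}}.\<close>
definition tg_C :: "('a::real_inner \<Rightarrow> 'b::real_inner) \<Rightarrow> ('a \<Rightarrow> 'b \<Rightarrow> 'a) \<Rightarrow> 'b \<Rightarrow> real \<Rightarrow> real
    \<Rightarrow> 'a \<Rightarrow> (nat \<Rightarrow> real) \<Rightarrow> (nat \<Rightarrow> nat set) \<Rightarrow> (nat \<Rightarrow> 'a) \<Rightarrow> nat \<Rightarrow> nat \<Rightarrow> 'a set" where
  "tg_C F Fadj yd \<delta> \<eta> x0 lam I X k j = (\<Inter>i\<le>j. tg_H F Fadj yd \<delta> \<eta> x0 lam X (tg_ks I k ! i))"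

primrec tg_p :: "('a::real_inner \<Rightarrow> 'b::real_inner) \<Rightarrow> ('a \<Rightarrow> 'b \<Rightarrow> 'a) \<Rightarrow> 'b \<Rightarrow> real \<Rightarrow> real
    \<Rightarrow> 'a \<Rightarrow> (nat \<Rightarrow> real) \<Rightarrow> (nat \<Rightarrow> nat set) \<Rightarrow> (nat \<Rightarrow> 'a) \<Rightarrow> nat \<Rightarrow> nat \<Rightarrow> 'a" where
  "tg_p F Fadj yd \<delta> \<eta> x0 lam I X k 0 = tg_z x0 lam X k"
| "tg_p F Fadj yd \<delta> \<eta> x0 lam I X k (Suc j) =
     mproj (tg_C F Fadj yd \<delta> \<eta> x0 lam I X k j) (tg_p F Fadj yd \<delta> \<eta> x0 lam I X k j)"

primrec tg_list :: "('a::real_inner \<Rightarrow> 'b::real_inner) \<Rightarrow> ('a \<Rightarrow> 'b \<Rightarrow> 'a) \<Rightarrow> 'b \<Rightarrow> real \<Rightarrow> real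
    \<Rightarrow> 'a \<Rightarrow> (nat \<Rightarrow> real) \<Rightarrow> (nat \<Rightarrow> nat set) \<Rightarrow> nat \<Rightarrow> 'a list" where
  "tg_list F Fadj yd \<delta> \<eta> x0 lam I 0 = [x0]"
| "tg_list F Fadj yd \<delta> \<eta> x0 lam I (Suc k) =
     (let xs = tg_list F Fadj yd \<delta> \<eta> x0 lam I k
      in xs @ [tg_p F Fadj yd \<delta> \<eta> x0 lam I (\<lambda>i. xs ! i) k (length (tg_ks I k))])"

definition tgss :: "('a::real_inner \<Rightarrow> 'b::real_inner) \<Rightarrow> ('a \<Rightarrow> 'b \<Rightarrow> 'a) \<Rightarrow> 'b \<Rightarrow> real \<Rightarrow> real
    \<Rightarrow> 'a \<Rightarrow> (nat \<Rightarrow> real) \<Rightarrow> (nat \<Rightarrow> nat set) \<Rightarrow> nat \<Rightarrow> 'a" where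
  "tgss F Fadj yd \<delta> \<eta> x0 lam I k = tg_list F Fadj yd \<delta> \<eta> x0 lam I k ! k"

definition tg_kstar :: "(nat \<Rightarrow> real) \<Rightarrow> real \<Rightarrow> real \<Rightarrow> enat" where
  "tg_kstar nr \<tau> \<delta> = (if \<exists>k. nr k \<le> \<tau> * \<delta> then enat (LEAST k. nr k \<le> \<tau> * \<delta>) else \<infinity>)"

end

theory Submission
  imports Defs
begin

text \<open>The solution \<open>x\<^sub>*\<close> lies in every strip \<open>H\<^sub>k\<close>, since the tangential cone condition
  bounds the linearisation error; hence every metric projection onto an intersection of strips is a
  Fejer step towards \<open>x\<^sub>*\<close>. While the discrepancy \<open>\<parallel>r\<^sub>k\<parallel>\<close> exceeds \<open>\<tau>\<delta>\<close>, the point \<open>z\<^sub>k\<close> is at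
  distance at least \<open>\<Psi>\<parallel>r\<^sub>k\<parallel>/c\<^sub>F\<close> from \<open>H\<^sub>k\<close>, so by Pythagoras the first projection gains
  \<open>\<Psi>\<^sup>2\<parallel>r\<^sub>k\<parallel>\<^sup>2/c\<^sub>F\<^sup>2\<close> in squared distance to \<open>x\<^sub>*\<close>. The extrapolation \<open>z\<^sub>k = x\<^sub>k + \<lambda>\<^sub>k(x\<^sub>k - x\<^sub>k\<^sub>-\<^sub>1)\<close> costs
  at most \<open>\<lambda>\<^sub>k(\<lambda>\<^sub>k+1)\<parallel>x\<^sub>k - x\<^sub>k\<^sub>-\<^sub>1\<parallel>\<^sup>2\<close> once distances to \<open>x\<^sub>*\<close> are known to decrease, and the
  coupling condition makes this at most a fraction \<open>1/\<mu>\<close> of the gain. Induction on \<open>k\<close> then keeps all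
  iterates in \<open>B\<^sub>\<rho>(x\<^sub>*)\<close>, where the assumptions apply, and telescoping the descent inequality
  bounds the sum of squared residuals.\<close>

section \<open>Metric projections in Hilbert spaces\<close>

lemma norm_diff_sq_midpoint:
  fixes v a b :: "'a::real_inner"
  shows "(norm (a - b))\<^sup>2
    = 2 * (norm (v - a))\<^sup>2 + 2 * (norm (v - b))\<^sup>2 - 4 * (norm (v - (1/2) *\<^sub>R (a + b)))\<^sup>2"
  unfolding power2_norm_eq_inner
  by (simp add: inner_diff inner_add inner_commute algebra_simps)

lemma norm_diff_sq_near_minimizers:
  fixes C :: "'a::real_inner set"
  assumes C: "convex C" and ab: "a \<in> C" "b \<in> C"
    and near: "norm (v - a) \<le> infdist v C + s" "norm (v - b) \<le> infdist v C + t"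
    and st: "0 \<le> s" "s \<le> 1" "0 \<le> t" "t \<le> 1"
  shows "(norm (a - b))\<^sup>2 \<le> 2 * (2 * infdist v C + 1) * (s + t)"
proof -
  define d where "d = infdist v C"
  have d0: "0 \<le> d"
    unfolding d_def by (rule infdist_nonneg)
  have sq: "(norm (v - x))\<^sup>2 \<le> d\<^sup>2 + (2 * d + 1) * e" if "norm (v - x) \<le> d + e" "0 \<le> e" "e \<le> 1" for x e
  proof -
    have "(norm (v - x))\<^sup>2 \<le> (d + e)\<^sup>2"
      using that by (intro power_mono) auto
    also have "\<dots> = d\<^sup>2 + 2 * d * e + e * e"
      by (simp add: power2_eq_square algebra_simps)
    also have "\<dots> \<le> d\<^sup>2 + (2 * d + 1) * e"
      using mult_left_le[of e e] that(2,3) by (simp add: algebra_simps)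
    finally show ?thesis .
  qed
  have "(1/2) *\<^sub>R (a + b) \<in> C"
    using convexD[OF C ab, of "1/2" "1/2"] by (simp add: scaleR_add_right)
  then have "d \<le> norm (v - (1/2) *\<^sub>R (a + b))"
    unfolding d_def using infdist_le by (metis dist_norm)
  then have "d\<^sup>2 \<le> (norm (v - (1/2) *\<^sub>R (a + b)))\<^sup>2"
    using d0 by (rule power_mono)
  moreover have "2 * (2 * d + 1) * (s + t) = 2 * ((2 * d + 1) * s) + 2 * ((2 * d + 1) * t)"
    by (simp add: algebra_simps)
  ultimately show ?thesis
    using norm_diff_sq_midpoint[of a b v] sq[of a s] sq[of b t] near st unfolding d_def by linarith
qed

lemma Cauchy_minimizing_sequence:
  fixes C :: "'a::real_inner set"
  assumes C: "convex C" and c: "\<And>n. c n \<in> C" "\<And>n. norm (v - c n) \<le> infdist v C + inverse (Suc n)"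
  shows "Cauchy c"
proof (rule CauchyI)
  fix \<epsilon> :: real
  assume "0 < \<epsilon>"
  define d where "d = infdist v C"
  define e :: "nat \<Rightarrow> real" where "e n = inverse (real (Suc n))" for n
  have d0: "0 \<le> d"
    unfolding d_def by (rule infdist_nonneg)
  have "e \<longlonglongrightarrow> 0"
    unfolding e_def by (rule LIMSEQ_inverse_real_of_nat)
  then have "\<forall>\<^sub>F n in sequentially. e n < \<epsilon>\<^sup>2 / (4 * (2 * d + 1))"
    by (rule order_tendstoD) (use \<open>0 < \<epsilon>\<close> d0 in simp)
  then obtain N where N: "e N < \<epsilon>\<^sup>2 / (4 * (2 * d + 1))"
    by (auto simp: eventually_sequentially)
  show "\<exists>M. \<forall>m\<ge>M. \<forall>n\<ge>M. norm (c m - c n) < \<epsilon>"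
  proof (intro exI allI impI)
    fix m n
    assume "N \<le> m" "N \<le> n"
    then have "e m + e n \<le> e N + e N"
      unfolding e_def by (intro add_mono le_imp_inverse_le) auto
    moreover have "(norm (c m - c n))\<^sup>2 \<le> 2 * (2 * d + 1) * (e m + e n)"
      unfolding d_def e_def using C c by (intro norm_diff_sq_near_minimizers) (auto simp: inverse_le_1_iff)
    ultimately have "(norm (c m - c n))\<^sup>2 \<le> 2 * (2 * d + 1) * (e N + e N)"
      using d0 by (smt (verit) mult_left_mono)
    also have "\<dots> = e N * (4 * (2 * d + 1))"
      by (simp add: algebra_simps)
    also have "\<dots> < \<epsilon>\<^sup>2"
      using N d0 by (simp add: pos_less_divide_eq)
    finally show "norm (c m - c n) < \<epsilon>"
      using \<open>0 < \<epsilon>\<close> by (metis power2_less_imp_less less_imp_le)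
  qed
qed

lemma closest_point_exists_complete:
  fixes C :: "'a::{real_inner,complete_space} set"
  assumes C: "closed C" "convex C" "C \<noteq> {}"
  shows "\<exists>p\<in>C. \<forall>q\<in>C. norm (v - p) \<le> norm (v - q)"
proof -
  define d where "d = infdist v C"
  have "\<exists>c\<in>C. norm (v - c) < d + inverse (Suc n)" for n
    using cInf_lessD[of "dist v ` C" "d + inverse (Suc n)"] C(3)
    by (auto simp: d_def infdist_notempty dist_norm)
  then obtain c where c: "\<And>n. c n \<in> C" "\<And>n. norm (v - c n) < d + inverse (Suc n)"
    by metis
  then have "Cauchy c"
    unfolding d_def using C(2) by (intro Cauchy_minimizing_sequence less_imp_le)
  then obtain p where p: "c \<longlonglongrightarrow> p"
    using Cauchy_convergent_iff convergent_def by blast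
  have "p \<in> C"
    using closed_sequentially[OF C(1)] c(1) p by blast
  moreover have "norm (v - p) \<le> d"
  proof (rule LIMSEQ_le)
    show "(\<lambda>n. norm (v - c n)) \<longlonglongrightarrow> norm (v - p)"
      by (intro tendsto_intros p)
    show "(\<lambda>n. d + inverse (real (Suc n))) \<longlonglongrightarrow> d"
      by (rule LIMSEQ_inverse_real_of_nat_add)
    show "\<exists>N. \<forall>n\<ge>N. norm (v - c n) \<le> d + inverse (real (Suc n))"
      using c(2) less_imp_le by blast
  qed
  ultimately show ?thesis
    using infdist_le[of _ C v] unfolding d_def by (metis dist_norm order_trans)
qed

lemma mproj_closed_convex:
  fixes C :: "'a::{real_inner,complete_space} set"
  assumes C: "closed C" "convex C" "C \<noteq> {}"
  shows "has_unique_proj C v" and "mproj C v \<in> C"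
    and "\<And>q. q \<in> C \<Longrightarrow> norm (v - mproj C v) \<le> norm (v - q)"
proof -
  obtain p where p: "p \<in> C" "\<forall>q\<in>C. norm (v - p) \<le> norm (v - q)"
    using closest_point_exists_complete[OF C] by blast
  have "p' = p" if "p' \<in> C" "\<forall>q\<in>C. norm (v - p') \<le> norm (v - q)" for p'
    using any_closest_point_unique[OF C(2,1) that(1) p(1), of v] that(2) p(2) by (simp add: dist_norm)
  with p show "has_unique_proj C v"
    unfolding has_unique_proj_def by blast
  have "mproj C v \<in> C \<and> (\<forall>q\<in>C. norm (v - mproj C v) \<le> norm (v - q))"
    unfolding mproj_def using p by (rule someI[of _ p, OF conjI])
  then show "mproj C v \<in> C" "\<And>q. q \<in> C \<Longrightarrow> norm (v - mproj C v) \<le> norm (v - q)"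
    by auto
qed

lemma mproj_pythagoras:
  fixes C :: "'a::{real_inner,complete_space} set"
  assumes C: "closed C" "convex C" and q: "q \<in> C"
  shows "(norm (v - mproj C v))\<^sup>2 + (norm (mproj C v - q))\<^sup>2 \<le> (norm (v - q))\<^sup>2"
proof -
  define p where "p = mproj C v"
  have "C \<noteq> {}"
    using q by auto
  note P = mproj_closed_convex[OF C this, where v=v, folded p_def]
  have "\<forall>z\<in>C. dist v p \<le> dist v z"
    using P(3) by (simp add: dist_norm)
  then have "inner (v - p) (q - p) \<le> 0"
    by (rule any_closest_point_dot[OF C(2,1) P(2) q])
  moreover have "(norm (v - q))\<^sup>2 = (norm (v - p))\<^sup>2 - 2 * inner (v - p) (q - p) + (norm (p - q))\<^sup>2"
    unfolding power2_norm_eq_inner by (simp add: inner_diff inner_commute algebra_simps)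
  ultimately show ?thesis
    unfolding p_def by linarith
qed

lemma norm_mproj_diff_le:
  fixes C :: "'a::{real_inner,complete_space} set"
  assumes "closed C" "convex C" "q \<in> C"
  shows "norm (mproj C v - q) \<le> norm (v - q)"
proof (rule power2_le_imp_le)
  show "(norm (mproj C v - q))\<^sup>2 \<le> (norm (v - q))\<^sup>2"
    using mproj_pythagoras[OF assms, of v] by (smt (verit) zero_le_power2)
qed simp

section \<open>Strips and the tangential cone condition\<close>

lemma strip_eq_vimage: "strip u a \<xi> = inner u -` {a - \<xi>..a + \<xi>}"
  unfolding strip_def by (auto simp: abs_le_iff)

lemma convex_strip: "convex (strip u a \<xi>)"
  unfolding strip_eq_vimage
  by (intro convex_linear_vimage bounded_linear.linear[OF bounded_linear_inner_right] convex_real_interval)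

lemma closed_strip: "closed (strip u a \<xi>)"
  unfolding strip_eq_vimage by (intro closed_vimage closed_real_atLeastAtMost continuous_intros)

lemma norm_adjoint_le:
  fixes A :: "'a::real_inner \<Rightarrow>\<^sub>L 'b::real_inner"
  assumes adj: "\<forall>v w. inner (blinfun_apply A v) w = inner v (G w)" and "norm A \<le> c"
  shows "norm (G w) \<le> c * norm w"
proof (cases "G w = 0")
  case True
  moreover have "0 \<le> c"
    using assms(2) norm_ge_zero order_trans by blast
  ultimately show ?thesis
    by simp
next
  case False
  have "norm (G w) * norm (G w) = inner (blinfun_apply A (G w)) w"
    using adj by (simp add: power2_norm_eq_inner inner_commute flip: power2_eq_square)
  also have "\<dots> \<le> norm (blinfun_apply A (G w)) * norm w"
    by (rule norm_cauchy_schwarz)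
  also have "\<dots> \<le> norm A * norm (G w) * norm w"
    by (intro mult_right_mono norm_blinfun) auto
  also have "\<dots> \<le> c * norm (G w) * norm w"
    using assms(2) by (intro mult_right_mono) auto
  also have "\<dots> = norm (G w) * (c * norm w)"
    by simp
  finally show ?thesis
    using False by simp
qed

lemma solution_in_strip:
  fixes A :: "'a::real_inner \<Rightarrow>\<^sub>L 'b::real_inner"
  assumes tcc: "norm (F z - F q - blinfun_apply A (z - q)) \<le> \<eta> * norm (F z - F q)"
    and adj: "\<forall>v w. inner (blinfun_apply A v) w = inner v (G w)"
    and sol: "F q = y" and data: "norm (yd - y) \<le> \<delta>" and "0 \<le> \<eta>"
  defines "r \<equiv> F z - yd"
  shows "q \<in> strip (G r) (inner (G r) z - (norm r)\<^sup>2) ((\<delta> + \<eta> * (norm r + \<delta>)) * norm r)"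
proof -
  define w where "w = F z - F q - blinfun_apply A (z - q)"
  have "inner (G r) q - (inner (G r) z - (norm r)\<^sup>2) = inner (G r) (q - z) + inner r r"
    by (simp add: inner_diff_right power2_norm_eq_inner)
  also have "inner (G r) (q - z) = - inner (blinfun_apply A (z - q)) r"
    using adj by (metis blinfun.minus_right inner_commute inner_minus_left minus_diff_eq)
  also have "- inner (blinfun_apply A (z - q)) r + inner r r = inner (w + (y - yd)) r"
    unfolding w_def r_def using sol by (simp add: inner_add_left inner_diff_left algebra_simps)
  finally have eq: "inner (G r) q - (inner (G r) z - (norm r)\<^sup>2) = inner (w + (y - yd)) r" .
  have "norm (F z - y) \<le> norm r + \<delta>"
    using norm_triangle_ineq[of r "yd - y"] data by (simp add: r_def)
  then have "norm w \<le> \<eta> * (norm r + \<delta>)"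
    using tcc sol \<open>0 \<le> \<eta>\<close> unfolding w_def by (metis mult_left_mono order_trans)
  moreover have "norm (y - yd) \<le> \<delta>"
    using data by (simp add: norm_minus_commute)
  ultimately have "norm (w + (y - yd)) \<le> \<delta> + \<eta> * (norm r + \<delta>)"
    using norm_triangle_ineq[of w "y - yd"] by linarith
  then have "\<bar>inner (w + (y - yd)) r\<bar> \<le> (\<delta> + \<eta> * (norm r + \<delta>)) * norm r"
    using Cauchy_Schwarz_ineq2[of "w + (y - yd)" r] by (meson mult_right_mono norm_ge_zero order_trans)
  then show ?thesis
    unfolding strip_def using eq by simp
qed

lemma residual_le_dist_strip:
  fixes u z p :: "'a::real_inner"
  assumes p: "p \<in> strip u (inner u z - (norm r)\<^sup>2) ((\<delta> + \<eta> * (norm r + \<delta>)) * norm r)"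
    and u: "norm u \<le> c * norm r" and discrepancy: "\<tau> * \<delta> < norm r"
    and tau: "(1 + \<eta>) / (1 - \<eta>) < \<tau>" and eta: "0 < \<eta>" "\<eta> < 1" and "0 \<le> \<delta>"
  shows "((1 - \<eta>) - (1 + \<eta>) / \<tau>) * norm r \<le> c * norm (z - p)"
proof -
  have "0 < \<tau>"
    using tau eta by (smt (verit) divide_pos_pos)
  have r_pos: "0 < norm r"
    using discrepancy \<open>0 < \<tau>\<close> \<open>0 \<le> \<delta>\<close> by (smt (verit) mult_nonneg_nonneg)
  have "\<delta> \<le> norm r / \<tau>"
    using discrepancy \<open>0 < \<tau>\<close> by (simp add: field_simps)
  then have "(1 + \<eta>) * \<delta> \<le> (1 + \<eta>) * (norm r / \<tau>)"
    using eta by (intro mult_left_mono) auto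
  also have "\<dots> = (1 + \<eta>) / \<tau> * norm r"
    by simp
  finally have "(1 + \<eta>) * \<delta> * norm r \<le> (1 + \<eta>) / \<tau> * norm r * norm r"
    by (rule mult_right_mono) simp
  moreover have "((1 - \<eta>) - (1 + \<eta>) / \<tau>) * norm r * norm r
      = (1 - \<eta>) * (norm r * norm r) - (1 + \<eta>) / \<tau> * norm r * norm r"
    by (simp add: algebra_simps)
  moreover have "(norm r)\<^sup>2 - (\<delta> + \<eta> * (norm r + \<delta>)) * norm r
      = (1 - \<eta>) * (norm r * norm r) - (1 + \<eta>) * \<delta> * norm r"
    by (simp add: power2_eq_square algebra_simps)
  ultimately have "((1 - \<eta>) - (1 + \<eta>) / \<tau>) * norm r * norm r
      \<le> (norm r)\<^sup>2 - (\<delta> + \<eta> * (norm r + \<delta>)) * norm r"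
    by linarith
  also have "\<dots> \<le> inner u (z - p)"
    using p by (simp add: strip_def inner_diff_right abs_le_iff)
  also have "\<dots> \<le> norm u * norm (z - p)"
    by (rule norm_cauchy_schwarz)
  also have "\<dots> \<le> c * norm r * norm (z - p)"
    using u by (rule mult_right_mono) simp
  also have "\<dots> = c * norm (z - p) * norm r"
    by simp
  finally show ?thesis
    using r_pos by simp
qed

section \<open>Unfolding the iteration\<close>

lemma length_tg_list: "length (tg_list F Fadj yd \<delta> \<eta> x0 lam I k) = Suc k"
  by (induct k) (simp_all add: Let_def)

lemma nth_tg_list_mono:
  assumes "i \<le> k" "k \<le> m"
  shows "tg_list F Fadj yd \<delta> \<eta> x0 lam I m ! i = tg_list F Fadj yd \<delta> \<eta> x0 lam I k ! i"
  using assms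
proof (induct m)
  case (Suc m)
  show ?case
  proof (cases "k \<le> m")
    case True
    then show ?thesis
      using Suc by (simp add: Let_def nth_append length_tg_list)
  next
    case False
    then show ?thesis
      using Suc.prems by (simp add: le_Suc_eq)
  qed
qed simp

lemma nth_tg_list: "i \<le> k \<Longrightarrow> tg_list F Fadj yd \<delta> \<eta> x0 lam I k ! i = tgss F Fadj yd \<delta> \<eta> x0 lam I i"
  unfolding tgss_def by (rule nth_tg_list_mono) auto

lemma set_tg_ks: "finite (I k) \<Longrightarrow> set (tg_ks I k) = I k"
  by (simp add: tg_ks_def)

lemma tg_ks_nth_0:
  assumes "finite (I k)" "k \<in> I k" "I k \<subseteq> {..k}"
  shows "tg_ks I k ! 0 = k"
proof -
  define xs where "xs = sorted_list_of_set (I k)"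
  have xs: "sorted xs" "set xs = I k" "xs \<noteq> []"
    using assms(1,2) unfolding xs_def by auto
  obtain i where i: "i < length xs" "xs ! i = k"
    using xs(2) assms(2) by (metis in_set_conv_nth)
  have "tg_ks I k ! 0 = xs ! (length xs - 1)"
    using xs(3) by (simp add: tg_ks_def xs_def[symmetric] rev_nth)
  moreover have "k \<le> xs ! (length xs - 1)"
    using i xs(1) sorted_nth_mono[of xs i "length xs - 1"] by auto
  moreover have "xs ! (length xs - 1) \<in> I k"
    using xs(2,3) nth_mem[of "length xs - 1" xs] by simp
  then have "xs ! (length xs - 1) \<le> k"
    using assms(3) by auto
  ultimately show ?thesis
    by simp
qed

lemma tg_z_cong: "(\<And>j. j \<le> i \<Longrightarrow> X j = Y j) \<Longrightarrow> tg_z x0 lam X i = tg_z x0 lam Y i"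
  by (simp add: tg_z_def tg_prev_def)

lemma tg_H_cong:
  "(\<And>j. j \<le> i \<Longrightarrow> X j = Y j) \<Longrightarrow> tg_H F Fadj yd \<delta> \<eta> x0 lam X i = tg_H F Fadj yd \<delta> \<eta> x0 lam Y i"
  unfolding tg_H_def tg_r_def by (simp add: tg_z_cong[of i X Y])

lemma tg_p_cong:
  assumes "\<And>i. i \<le> k \<Longrightarrow> X i = Y i" "finite (I k)" "I k \<subseteq> {..k}" "j \<le> length (tg_ks I k)"
  shows "tg_p F Fadj yd \<delta> \<eta> x0 lam I X k j = tg_p F Fadj yd \<delta> \<eta> x0 lam I Y k j"
  using assms(4)
proof (induct j)
  case 0
  show ?case
    using assms(1) by (simp add: tg_z_cong[of k X Y])
next
  case (Suc j)
  have "tg_ks I k ! i \<le> k" if "i \<le> j" for i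
    using nth_mem[of i "tg_ks I k"] that Suc.prems assms(2,3) by (auto simp: set_tg_ks)
  then have "tg_C F Fadj yd \<delta> \<eta> x0 lam I X k j = tg_C F Fadj yd \<delta> \<eta> x0 lam I Y k j"
    unfolding tg_C_def by (intro INF_cong refl tg_H_cong assms(1)) (auto intro: order_trans)
  then show ?case
    using Suc by simp
qed

lemma tgss_0: "tgss F Fadj yd \<delta> \<eta> x0 lam I 0 = x0"
  by (simp add: tgss_def)

lemma tgss_Suc:
  assumes "finite (I k)" "I k \<subseteq> {..k}"
  shows "tgss F Fadj yd \<delta> \<eta> x0 lam I (Suc k) =
    tg_p F Fadj yd \<delta> \<eta> x0 lam I (tgss F Fadj yd \<delta> \<eta> x0 lam I) k (length (tg_ks I k))"
proof -
  define xs where "xs = tg_list F Fadj yd \<delta> \<eta> x0 lam I k"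
  have "tgss F Fadj yd \<delta> \<eta> x0 lam I (Suc k)
      = tg_p F Fadj yd \<delta> \<eta> x0 lam I (\<lambda>i. xs ! i) k (length (tg_ks I k))"
    unfolding tgss_def by (simp add: Let_def xs_def nth_append length_tg_list)
  also have "\<dots> = tg_p F Fadj yd \<delta> \<eta> x0 lam I (tgss F Fadj yd \<delta> \<eta> x0 lam I) k (length (tg_ks I k))"
    using assms by (intro tg_p_cong) (auto simp: xs_def nth_tg_list)
  finally show ?thesis .
qed

section \<open>Fejer monotonicity and the residual bound\<close>

lemma norm_extrapolation_sq:
  fixes a b q :: "'a::real_inner"
  shows "(norm (a + l *\<^sub>R (a - b) - q))\<^sup>2
    = (1 + l) * (norm (a - q))\<^sup>2 - l * (norm (b - q))\<^sup>2 + l * (l + 1) * (norm (a - b))\<^sup>2"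
proof -
  have e: "a + l *\<^sub>R (a - b) - q = (1 + l) *\<^sub>R (a - q) - l *\<^sub>R (b - q)"
    by (simp add: algebra_simps)
  have f: "a - b = (a - q) - (b - q)"
    by simp
  show ?thesis
    unfolding e f power2_norm_eq_inner by (simp add: inner_diff inner_add inner_commute algebra_simps)
qed

locale tgss_setting =
  fixes F :: "'a::{real_inner,complete_space} \<Rightarrow> 'b::real_inner"
    and F' :: "'a \<Rightarrow> 'a \<Rightarrow>\<^sub>L 'b"
    and Fadj :: "'a \<Rightarrow> 'b \<Rightarrow> 'a"
    and x0 xstar :: 'a
    and y yd :: 'b
    and \<rho> \<eta> cF \<delta> \<tau> :: real
    and lam :: "nat \<Rightarrow> real"
    and I :: "nat \<Rightarrow> nat set"
  assumes adjoint: "\<forall>x\<in>cball x0 (4 * \<rho>). \<forall>v w. inner (blinfun_apply (F' x) v) w = inner v (Fadj x w)"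
    and solution: "xstar \<in> cball x0 \<rho>" "F xstar = y"
    and eta: "0 < \<eta>" "\<eta> < 1"
    and tangential_cone: "\<forall>x\<in>cball x0 (4 * \<rho>). \<forall>x'\<in>cball x0 (4 * \<rho>).
      norm (F x - F x' - blinfun_apply (F' x) (x - x')) \<le> \<eta> * norm (F x - F x')"
    and deriv_bound: "\<forall>x\<in>cball x0 (4 * \<rho>). 0 < norm (F' x) \<and> norm (F' x) \<le> cF"
    and data: "0 \<le> \<delta>" "norm (yd - y) \<le> \<delta>"
    and lam: "\<forall>k. 0 \<le> lam k \<and> lam k \<le> 1"
    and index_sets: "\<forall>k. finite (I k) \<and> k \<in> I k \<and> I k \<subseteq> {..k}"
    and tau: "(1 + \<eta>) / (1 - \<eta>) < \<tau>"
begin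

abbreviation "X \<equiv> tgss F Fadj yd \<delta> \<eta> x0 lam I"
abbreviation "prev \<equiv> tg_prev x0 X"
abbreviation "Z \<equiv> tg_z x0 lam X"
abbreviation "res \<equiv> tg_r F yd x0 lam X"
abbreviation "Hs \<equiv> tg_H F Fadj yd \<delta> \<eta> x0 lam X"
abbreviation "Cs \<equiv> tg_C F Fadj yd \<delta> \<eta> x0 lam I X"
abbreviation "Ps \<equiv> tg_p F Fadj yd \<delta> \<eta> x0 lam I X"
abbreviation "kstar \<equiv> tg_kstar (\<lambda>k. norm (res k)) \<tau> \<delta>"
abbreviation "\<Psi> \<equiv> (1 - \<eta>) - (1 + \<eta>) / \<tau>"

lemma x0_in_ball: "x0 \<in> cball x0 (4 * \<rho>)"
proof -
  have "0 \<le> \<rho>"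
    using solution(1) by (meson mem_cball order.trans zero_le_dist)
  then show ?thesis
    by simp
qed

lemma cF_pos: "0 < cF"
  using deriv_bound x0_in_ball by (meson order_less_le_trans)

lemma ball_xstar_subset: "cball xstar \<rho> \<subseteq> cball x0 (2 * \<rho>)"
proof
  fix x
  assume "x \<in> cball xstar \<rho>"
  then show "x \<in> cball x0 (2 * \<rho>)"
    using solution(1) dist_triangle[of x0 x xstar] by simp
qed

lemma Psi_pos: "0 < \<Psi>"
proof -
  have "0 < \<tau>"
    using tau eta by (smt (verit) divide_pos_pos)
  moreover have "1 + \<eta> < \<tau> * (1 - \<eta>)"
    using tau eta by (simp add: field_simps)
  ultimately show ?thesis
    by (simp add: field_simps)
qed

lemma residual_gt:
  assumes "enat k < kstar"
  shows "\<tau> * \<delta> < norm (res k)"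
proof (cases "\<exists>i. norm (res i) \<le> \<tau> * \<delta>")
  case True
  then have "k < (LEAST i. norm (res i) \<le> \<tau> * \<delta>)"
    using assms by (simp add: tg_kstar_def)
  then show ?thesis
    using not_less_Least by fastforce
qed (simp add: not_le)

lemma X_0: "X 0 = x0"
  by (rule tgss_0)

lemma X_Suc: "X (Suc k) = Ps k (length (tg_ks I k))"
  using index_sets by (intro tgss_Suc) auto

lemma Hs_eq: "Hs k = strip (Fadj (Z k) (res k)) (inner (Fadj (Z k) (res k)) (Z k) - (norm (res k))\<^sup>2)
    ((\<delta> + \<eta> * (norm (res k) + \<delta>)) * norm (res k))"
  unfolding tg_H_def tg_r_def Let_def by simp

lemma Z_in_ball:
  assumes "\<forall>i\<le>k. X i \<in> cball xstar \<rho>"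
  shows "Z k \<in> cball x0 (4 * \<rho>)"
proof -
  have Xk: "norm (X k - xstar) \<le> \<rho>"
    using assms by (simp add: dist_norm norm_minus_commute)
  have pk: "norm (prev k - xstar) \<le> \<rho>"
    using assms solution(1) by (cases k) (auto simp: tg_prev_def dist_norm norm_minus_commute)
  have "norm (lam k *\<^sub>R (X k - prev k)) \<le> norm (X k - prev k)"
    using lam by (simp add: mult_left_le_one_le)
  also have "\<dots> \<le> 2 * \<rho>"
    using norm_triangle_ineq4[of "X k - xstar" "prev k - xstar"] Xk pk by simp
  finally have "norm (lam k *\<^sub>R (X k - prev k)) \<le> 2 * \<rho>" .
  moreover have Z: "Z k - x0 = (X k - xstar) + lam k *\<^sub>R (X k - prev k) + (xstar - x0)"
    by (simp add: tg_z_def)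
  moreover have "norm (xstar - x0) \<le> \<rho>"
    using solution(1) by (simp add: dist_norm norm_minus_commute)
  moreover have "norm ((X k - xstar) + lam k *\<^sub>R (X k - prev k) + (xstar - x0))
      \<le> norm (X k - xstar) + norm (lam k *\<^sub>R (X k - prev k)) + norm (xstar - x0)"
    by (intro norm_triangle_le add_right_mono norm_triangle_ineq)
  ultimately have "norm (Z k - x0) \<le> 4 * \<rho>"
    unfolding Z using Xk by linarith
  then show ?thesis
    by (simp add: dist_norm norm_minus_commute)
qed

lemma norm_Fadj_residual:
  assumes "Z k \<in> cball x0 (4 * \<rho>)"
  shows "norm (Fadj (Z k) (res k)) \<le> cF * norm (res k)"
  by (rule norm_adjoint_le[where A="F' (Z k)"]) (use adjoint deriv_bound assms in blast)+

lemma xstar_in_Hs: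
  assumes "Z k \<in> cball x0 (4 * \<rho>)"
  shows "xstar \<in> Hs k"
  unfolding Hs_eq tg_r_def
proof (rule solution_in_strip[where A="F' (Z k)"])
  have "xstar \<in> cball x0 (4 * \<rho>)"
    using solution(1) x0_in_ball by auto
  then show "norm (F (Z k) - F xstar - blinfun_apply (F' (Z k)) (Z k - xstar)) \<le> \<eta> * norm (F (Z k) - F xstar)"
    using tangential_cone assms by blast
  show "\<forall>v w. inner (blinfun_apply (F' (Z k)) v) w = inner v (Fadj (Z k) w)"
    using adjoint assms by blast
qed (use solution(2) data(2) eta(1) in simp_all)

lemma Cs_closed_convex:
  assumes "\<forall>i\<le>k. X i \<in> cball xstar \<rho>" "j < length (tg_ks I k)"
  shows "closed (Cs k j)" and "convex (Cs k j)" and "xstar \<in> Cs k j"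
proof -
  show "closed (Cs k j)" "convex (Cs k j)"
    unfolding tg_C_def Hs_eq by (auto intro!: closed_INT convex_INT closed_strip convex_strip)
  have "xstar \<in> Hs (tg_ks I k ! i)" if "i \<le> j" for i
  proof (rule xstar_in_Hs, rule Z_in_ball)
    have "tg_ks I k ! i \<in> I k"
      using nth_mem[of i "tg_ks I k"] that assms(2) index_sets by (simp add: set_tg_ks)
    then have "tg_ks I k ! i \<le> k"
      using index_sets by auto
    then show "\<forall>i'\<le>tg_ks I k ! i. X i' \<in> cball xstar \<rho>"
      using assms(1) by simp
  qed
  then show "xstar \<in> Cs k j"
    unfolding tg_C_def by blast
qed

lemma unique_projections:
  assumes "\<forall>i\<le>k. X i \<in> cball xstar \<rho>" "j < length (tg_ks I k)"
  shows "has_unique_proj (Cs k j) (Ps k j)"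
  using Cs_closed_convex[OF assms] by (intro mproj_closed_convex(1)) auto

lemma dist_Ps_mono:
  assumes "\<forall>i\<le>k. X i \<in> cball xstar \<rho>" "1 \<le> j" "j \<le> length (tg_ks I k)"
  shows "norm (Ps k j - xstar) \<le> norm (Ps k 1 - xstar)"
  using assms(2,3)
proof (induct j)
  case (Suc j)
  show ?case
  proof (cases "j = 0")
    case False
    then have "norm (Ps k (Suc j) - xstar) \<le> norm (Ps k j - xstar)"
      using Cs_closed_convex[OF assms(1), of j] Suc.prems by (simp add: norm_mproj_diff_le)
    also have "\<dots> \<le> norm (Ps k 1 - xstar)"
      using Suc False by simp
    finally show ?thesis .
  qed simp
qed simp

lemma fejer_step:
  assumes k: "enat k < kstar" and ball: "\<forall>i\<le>k. X i \<in> cball xstar \<rho>"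
  shows "cF\<^sup>2 * (norm (X (Suc k) - xstar))\<^sup>2 + \<Psi>\<^sup>2 * (norm (res k))\<^sup>2 \<le> cF\<^sup>2 * (norm (Z k - xstar))\<^sup>2"
proof -
  let ?p = "Ps k 1"
  have Zk: "Z k \<in> cball x0 (4 * \<rho>)"
    using ball by (rule Z_in_ball)
  have I: "finite (I k)" "k \<in> I k" "I k \<subseteq> {..k}"
    using index_sets by auto
  then have len: "1 \<le> length (tg_ks I k)"
    by (metis One_nat_def Suc_leI empty_iff length_greater_0_conv list.set(1) set_tg_ks)
  have "Cs k 0 = Hs k"
    unfolding tg_C_def using tg_ks_nth_0[of I k, OF I] by simp
  then have p: "?p = mproj (Hs k) (Z k)"
    by simp
  have H: "closed (Hs k)" "convex (Hs k)" "xstar \<in> Hs k"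
    unfolding Hs_eq by (simp_all add: closed_strip convex_strip xstar_in_Hs[OF Zk, unfolded Hs_eq])
  have pyth: "(norm (Z k - ?p))\<^sup>2 + (norm (?p - xstar))\<^sup>2 \<le> (norm (Z k - xstar))\<^sup>2"
    unfolding p using H by (rule mproj_pythagoras)
  have "?p \<in> Hs k"
    unfolding p using H by (intro mproj_closed_convex(2)) auto
  then have "\<Psi> * norm (res k) \<le> cF * norm (Z k - ?p)"
    unfolding Hs_eq
    by (rule residual_le_dist_strip[OF _ norm_Fadj_residual[OF Zk] residual_gt[OF k] tau eta data(1)])
  then have far: "\<Psi>\<^sup>2 * (norm (res k))\<^sup>2 \<le> cF\<^sup>2 * (norm (Z k - ?p))\<^sup>2"
    using Psi_pos by (metis power_mono power_mult_distrib mult_nonneg_nonneg less_imp_le norm_ge_zero)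
  have "norm (X (Suc k) - xstar) \<le> norm (?p - xstar)"
    unfolding X_Suc using dist_Ps_mono[OF ball _ order.refl] len by simp
  then have "cF\<^sup>2 * (norm (X (Suc k) - xstar))\<^sup>2 \<le> cF\<^sup>2 * (norm (?p - xstar))\<^sup>2"
    by (intro mult_left_mono power_mono) auto
  moreover have "cF\<^sup>2 * (norm (Z k - ?p))\<^sup>2 + cF\<^sup>2 * (norm (?p - xstar))\<^sup>2 \<le> cF\<^sup>2 * (norm (Z k - xstar))\<^sup>2"
    using pyth by (metis distrib_left mult_left_mono zero_le_power2)
  ultimately show ?thesis
    using far by linarith
qed

text \<open>The coupling condition lets the extrapolation term be absorbed by a fraction \<open>1/\<mu>\<close> of
  the residual gain of the projection step; distances to \<open>x\<^sub>*\<close> must already decrease up to \<open>k\<close>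
  for the term \<open>\<lambda>\<^sub>k(\<parallel>x\<^sub>k - x\<^sub>*\<parallel>\<^sup>2 - \<parallel>x\<^sub>k\<^sub>-\<^sub>1 - x\<^sub>*\<parallel>\<^sup>2)\<close> to be nonpositive.\<close>
lemma descent_step:
  assumes k: "enat k < kstar" and ball: "\<forall>i\<le>k. X i \<in> cball xstar \<rho>"
    and mono: "norm (X k - xstar) \<le> norm (prev k - xstar)"
    and mu: "1 < \<mu>"
    and coupling: "lam k * (lam k + 1) * (norm (X k - prev k))\<^sup>2 \<le> \<Psi>\<^sup>2 * (norm (res k))\<^sup>2 / (\<mu> * cF\<^sup>2)"
  shows "(norm (X (Suc k) - xstar))\<^sup>2 + (\<mu> - 1) / \<mu> * \<Psi>\<^sup>2 / cF\<^sup>2 * (norm (res k))\<^sup>2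
    \<le> (norm (X k - xstar))\<^sup>2"
proof -
  define a where "a = (norm (X k - xstar))\<^sup>2"
  define b where "b = (norm (prev k - xstar))\<^sup>2"
  define D where "D = lam k * (lam k + 1) * (norm (X k - prev k))\<^sup>2"
  define R where "R = \<Psi>\<^sup>2 * (norm (res k))\<^sup>2"
  define X1 where "X1 = (norm (X (Suc k) - xstar))\<^sup>2"
  have "(norm (Z k - xstar))\<^sup>2 = (1 + lam k) * a - lam k * b + D"
    unfolding a_def b_def D_def tg_z_def by (rule norm_extrapolation_sq)
  then have "cF\<^sup>2 * X1 + R \<le> cF\<^sup>2 * ((1 + lam k) * a - lam k * b + D)"
    using fejer_step[OF k ball] unfolding X1_def R_def by simp
  moreover have "cF\<^sup>2 * ((1 + lam k) * a - lam k * b + D) = cF\<^sup>2 * a + cF\<^sup>2 * (lam k * (a - b)) + cF\<^sup>2 * D"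
    by (simp add: algebra_simps)
  moreover have "cF\<^sup>2 * (lam k * (a - b)) \<le> 0"
    using lam mono unfolding a_def b_def by (simp add: mult_nonneg_nonpos power_mono)
  moreover have "cF\<^sup>2 * D \<le> R / \<mu>"
    using coupling cF_pos mu unfolding D_def R_def by (simp add: field_simps)
  ultimately have "cF\<^sup>2 * X1 + R \<le> cF\<^sup>2 * a + R / \<mu>"
    by linarith
  moreover have "cF\<^sup>2 * (X1 + (\<mu> - 1) / \<mu> * R / cF\<^sup>2) = cF\<^sup>2 * X1 + R - R / \<mu>"
    using cF_pos mu by (simp add: field_simps)
  ultimately have "cF\<^sup>2 * (X1 + (\<mu> - 1) / \<mu> * R / cF\<^sup>2) \<le> cF\<^sup>2 * a"
    by linarith
  then show ?thesis
    using cF_pos unfolding X1_def R_def a_def by (simp add: mult.assoc)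
qed

end

locale tgss_coupled = tgss_setting +
  fixes \<mu> :: real
  assumes mu: "1 < \<mu>"
    and coupling: "\<forall>k. enat k < kstar \<longrightarrow>
      lam k * (lam k + 1) * (norm (X k - prev k))\<^sup>2 \<le> \<Psi>\<^sup>2 * (norm (res k))\<^sup>2 / (\<mu> * cF\<^sup>2)"
begin

lemma descent_invariant:
  assumes "enat n \<le> kstar"
  shows "(\<forall>i\<le>n. X i \<in> cball xstar \<rho> \<and> norm (X i - xstar) \<le> norm (prev i - xstar))
    \<and> (\<mu> - 1) / \<mu> * \<Psi>\<^sup>2 / cF\<^sup>2 * (\<Sum>k<n. (norm (res k))\<^sup>2) + (norm (X n - xstar))\<^sup>2
      \<le> (norm (x0 - xstar))\<^sup>2"
  using assms
proof (induct n)
  case 0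
  show ?case
    using solution(1) by (simp add: X_0 tg_prev_def dist_norm norm_minus_commute)
next
  case (Suc k)
  let ?c = "(\<mu> - 1) / \<mu> * \<Psi>\<^sup>2 / cF\<^sup>2"
  have k: "enat k < kstar"
    using Suc.prems by (simp add: Suc_ile_eq)
  then have IH: "\<forall>i\<le>k. X i \<in> cball xstar \<rho> \<and> norm (X i - xstar) \<le> norm (prev i - xstar)"
      "?c * (\<Sum>i<k. (norm (res i))\<^sup>2) + (norm (X k - xstar))\<^sup>2 \<le> (norm (x0 - xstar))\<^sup>2"
    using Suc.hyps by auto
  have step: "(norm (X (Suc k) - xstar))\<^sup>2 + ?c * (norm (res k))\<^sup>2 \<le> (norm (X k - xstar))\<^sup>2"
    using IH(1) coupling k by (intro descent_step[OF k _ _ mu]) auto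
  have "0 \<le> ?c"
    using mu by simp
  then have "norm (X (Suc k) - xstar) \<le> norm (X k - xstar)"
    using step by (smt (verit) mult_nonneg_nonneg power2_le_imp_le norm_ge_zero zero_le_power2)
  moreover have "norm (X k - xstar) \<le> \<rho>"
    using IH(1) by (simp add: dist_norm norm_minus_commute)
  moreover have "?c * (\<Sum>i<Suc k. (norm (res i))\<^sup>2) + (norm (X (Suc k) - xstar))\<^sup>2 \<le> (norm (x0 - xstar))\<^sup>2"
    using IH(2) step by (simp add: distrib_left)
  ultimately show ?case
    using IH(1) by (auto simp: le_Suc_eq tg_prev_def dist_norm norm_minus_commute)
qed

lemma iterates_in_ball: "enat n \<le> kstar \<Longrightarrow> X n \<in> cball xstar \<rho>"
  using descent_invariant by blast

lemma dist_iterates_decreasing: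
  assumes "enat k < kstar"
  shows "norm (X (Suc k) - xstar) \<le> norm (X k - xstar)"
proof -
  have "enat (Suc k) \<le> kstar"
    using assms by (simp add: Suc_ile_eq)
  then have "norm (X (Suc k) - xstar) \<le> norm (prev (Suc k) - xstar)"
    using descent_invariant by blast
  then show ?thesis
    by (simp add: tg_prev_def)
qed

lemma iteration_well_defined:
  assumes "enat k < kstar"
  shows "Z k \<in> cball x0 (4 * \<rho>) \<and> (\<forall>j<length (tg_ks I k). has_unique_proj (Cs k j) (Ps k j))"
proof -
  have "\<forall>i\<le>k. X i \<in> cball xstar \<rho>"
    using assms iterates_in_ball by (meson enat_ord_simps(1) le_less_trans less_imp_le)
  then show ?thesis
    using Z_in_ball unique_projections by blast
qed

lemma residual_sum_bound:
  assumes "enat n \<le> kstar"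
  shows "(\<Sum>k<n. (norm (res k))\<^sup>2) \<le> cF\<^sup>2 / ((\<mu> - 1) / \<mu> * \<Psi>\<^sup>2) * (norm (x0 - xstar))\<^sup>2"
proof -
  define c where "c = (\<mu> - 1) / \<mu> * \<Psi>\<^sup>2 / cF\<^sup>2"
  have "0 < c"
    unfolding c_def using mu Psi_pos cF_pos by simp
  have "c * (\<Sum>k<n. (norm (res k))\<^sup>2) \<le> (norm (x0 - xstar))\<^sup>2"
    using descent_invariant[OF assms] unfolding c_def by (smt (verit) zero_le_power2)
  then have "(\<Sum>k<n. (norm (res k))\<^sup>2) \<le> (norm (x0 - xstar))\<^sup>2 / c"
    using \<open>0 < c\<close> by (simp add: pos_le_divide_eq mult.commute)
  also have "\<dots> = cF\<^sup>2 / ((\<mu> - 1) / \<mu> * \<Psi>\<^sup>2) * (norm (x0 - xstar))\<^sup>2"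
    unfolding c_def by simp
  finally show ?thesis .
qed

end

theorem proposition4p2:
  fixes F :: "'a::{real_inner,complete_space} \<Rightarrow> 'b::{real_inner,complete_space}"
    and F' :: "'a \<Rightarrow> 'a \<Rightarrow>\<^sub>L 'b"
    and Fadj :: "'a \<Rightarrow> 'b \<Rightarrow> 'a"
    and D :: "'a set"
    and x0 xstar :: 'a
    and y yd :: 'b
    and \<rho> \<eta> cF \<delta> \<tau> \<mu> :: real
    and K :: nat
    and lam :: "nat \<Rightarrow> real"
    and I :: "nat \<Rightarrow> nat set"
  assumes deriv: "\<forall>x\<in>D. (F has_derivative blinfun_apply (F' x)) (at x within D)"
    and deriv_cont: "continuous_on D F'"
    and adjoint: "\<forall>x\<in>D. \<forall>v w. inner (blinfun_apply (F' x) v) w = inner v (Fadj x w)"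
    and rho_pos: "\<rho> > 0"
    and domain: "cball x0 (4 * \<rho>) \<subseteq> D"
    and A1: "xstar \<in> cball x0 \<rho>" "F xstar = y"
    and A2: "0 < \<eta>" "\<eta> < 1"
      "\<forall>x\<in>cball x0 (4 * \<rho>). \<forall>x'\<in>cball x0 (4 * \<rho>).
         norm (F x - F x' - blinfun_apply (F' x) (x - x')) \<le> \<eta> * norm (F x - F x')"
    and A3: "\<forall>x\<in>cball x0 (4 * \<rho>). 0 < norm (F' x) \<and> norm (F' x) \<le> cF"
    and data: "\<delta> \<ge> 0" "norm (yd - y) \<le> \<delta>"
    and K_ge: "K \<ge> 1"
    and lam: "\<forall>k. 0 \<le> lam k \<and> lam k \<le> 1" "lam 0 = 0"
    and Iset: "\<forall>k. finite (I k) \<and> k \<in> I k \<and> I k \<subseteq> {k - K..k}"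
    and tau: "\<tau> > (1 + \<eta>) / (1 - \<eta>)"
    and mu: "\<mu> > 1"
    and X_def: "X \<equiv> tgss F Fadj yd \<delta> \<eta> x0 lam I"
    and r_def: "r \<equiv> tg_r F yd x0 lam X"
    and kstar_def: "kstar \<equiv> tg_kstar (\<lambda>k. norm (r k)) \<tau> \<delta>"
    and Psi_def: "\<Psi> \<equiv> (1 - \<eta>) - (1 + \<eta>) / \<tau>"
    and coupling: "\<forall>k. enat k < kstar \<longrightarrow>
       lam k * (lam k + 1) * (norm (X k - tg_prev x0 X k))\<^sup>2 \<le> \<Psi>\<^sup>2 * (norm (r k))\<^sup>2 / (\<mu> * cF\<^sup>2)"
  shows "(\<forall>k. enat k < kstar \<longrightarrow>
            tg_z x0 lam X k \<in> cball x0 (4 * \<rho>) \<and>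
            (\<forall>j < length (tg_ks I k).
               has_unique_proj (tg_C F Fadj yd \<delta> \<eta> x0 lam I X k j)
                               (tg_p F Fadj yd \<delta> \<eta> x0 lam I X k j)))
       \<and> norm (X 0 - xstar) \<le> norm (tg_prev x0 X 0 - xstar)
       \<and> (\<forall>k. enat k < kstar \<longrightarrow> norm (X (Suc k) - xstar) \<le> norm (X k - xstar))
       \<and> tg_prev x0 X 0 \<in> cball xstar \<rho>
       \<and> (\<forall>k. enat k \<le> kstar \<longrightarrow> X k \<in> cball xstar \<rho>)
       \<and> cball xstar \<rho> \<subseteq> cball x0 (2 * \<rho>)
       \<and> (\<forall>n. enat n \<le> kstar \<longrightarrow>
            (\<Sum>k<n. (norm (r k))\<^sup>2) \<le> cF\<^sup>2 / (((\<mu> - 1) / \<mu>) * \<Psi>\<^sup>2) * (norm (x0 - xstar))\<^sup>2)"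
proof -
  note coupling = coupling[unfolded X_def r_def kstar_def Psi_def]
  interpret tgss_coupled F F' Fadj x0 xstar y yd \<rho> \<eta> cF \<delta> \<tau> lam I \<mu>
    by unfold_locales (use adjoint domain A1 A2 A3 data lam(1) Iset tau mu coupling in fastforce)+
  show ?thesis
    unfolding X_def r_def kstar_def Psi_def
    using iteration_well_defined dist_iterates_decreasing iterates_in_ball ball_xstar_subset
      residual_sum_bound A1(1)
    by (simp add: X_0 tg_prev_def dist_commute)
qed

end
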